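(* Let $I,J,K$ be a partition of $[m]$ and $\bm a\in\mathbb{R}^m$ with $P(\bm a,I,J,K)\ne\emptyset$, and let $F_{\bm a}$ be the face of $\delta\mathcal{A}_{\bm o}$ whose relative interior contains $\bm a$. Then $P(\bm b,I,J,K)\neq\emptyset$ for every $\bm b\in F_{\bm a}$.
   Context: Fix nonzero $\bm u_1,\dots,\bm u_m\in\mathbb{R}^n$ (repetitions and parallel vectors allowed), $U$ the $m\times n$ matrix with these rows; $U_I$, $\bm a_I$ denote rows/entries indexed by $I$. For a partition $I,J,K$ of $[m]$ (parts may be empty), $P(\bm a,I,J,K)=\{\bm x\in\mathbb{R}^n:U_I\bm x=\bm a_I,\ U_J\bm x\le\bm a_J,\ U_K\bm x\ge\bm a_K\}$. A circuit is a subset $C\subseteq[m]$ with $\{\bm u_i:i\in C\}$ a minimal linearly dependent indexed family; $\bm c^C\in\mathbb{R}^m$ satisfies $\sum c_i\bm u_i=\bm 0$ and $c_i\neq0\iff i\in C$. The derived arrangement $\delta\mathcal{A}_{\bm o}$ consists of the hyperplanes $\langle\bm c^C,\bm y\rangle=0$ in $\mathbb{R}^m$; its open faces are the nonempty sets $\{\bm y:\operatorname{sign}\langle\bm c^C,\bm y\rangle=\epsilon_C\ \forall C\}$ for fixed signs $\epsilon_C$, and its faces are the closures of open faces. Thus $F_{\bm a}$ is the closure of the open face containing $\bm a$. *)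

theory Defs
  imports "HOL-Analysis.Analysis"
begin

text \<open>Rows of U :: real^'n^'m are the vectors u_i (i :: 'm), so [m] is the finite type 'm
  and R^n is real^'n.\<close>

definition polyP :: "real^'n^'m \<Rightarrow> real^'m \<Rightarrow> 'm set \<Rightarrow> 'm set \<Rightarrow> 'm set \<Rightarrow> (real^'n) set" where
  "polyP U a I J K = {x. (\<forall>i\<in>I. U$i \<bullet> x = a$i) \<and> (\<forall>i\<in>J. U$i \<bullet> x \<le> a$i) \<and> (\<forall>i\<in>K. U$i \<bullet> x \<ge> a$i)}"

definition indexed_dependent :: "real^'n^'m \<Rightarrow> 'm set \<Rightarrow> bool" where
  "indexed_dependent U D \<longleftrightarrow> (\<exists>c::'m \<Rightarrow> real. (\<exists>i\<in>D. c i \<noteq> 0) \<and> (\<Sum>i\<in>D. c i *\<^sub>R U$i) = 0)"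

definition circuit :: "real^'n^'m \<Rightarrow> 'm set \<Rightarrow> bool" where
  "circuit U C \<longleftrightarrow> indexed_dependent U C \<and> (\<forall>D. D \<subset> C \<longrightarrow> \<not> indexed_dependent U D)"

definition circuit_vectors :: "real^'n^'m \<Rightarrow> ('m set \<Rightarrow> real^'m) \<Rightarrow> bool" where
  "circuit_vectors U cC \<longleftrightarrow> (\<forall>C. circuit U C \<longrightarrow>
      (\<forall>i. cC C $ i \<noteq> 0 \<longleftrightarrow> i \<in> C) \<and> (\<Sum>i\<in>UNIV. cC C $ i *\<^sub>R U$i) = 0)"

text \<open>Open face of the derived arrangement containing a, and its closure F_a.\<close>
definition open_face :: "real^'n^'m \<Rightarrow> ('m set \<Rightarrow> real^'m) \<Rightarrow> real^'m \<Rightarrow> (real^'m) set" where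
  "open_face U cC a = {y. \<forall>C. circuit U C \<longrightarrow> sgn (cC C \<bullet> y) = sgn (cC C \<bullet> a)}"

definition face_of_point :: "real^'n^'m \<Rightarrow> ('m set \<Rightarrow> real^'m) \<Rightarrow> real^'m \<Rightarrow> (real^'m) set" where
  "face_of_point U cC a = closure (open_face U cC a)"

end

theory Submission
  imports Defs
begin

text \<open>By Farkas' lemma, \<open>P(b,I,J,K)\<close> is nonempty iff \<open>y \<bullet> b \<ge> 0\<close> for every \<open>y\<close> in the dual cone
  \<open>{y. \<Sum>i. y\<^sub>i u\<^sub>i = 0, y\<^sub>J \<ge> 0, y\<^sub>K \<le> 0}\<close>. Every element of this cone is a nonnegative combination
  of the circuit vectors \<open>\<plusminus>c\<^sup>C\<close> lying in it (peel off circuits inside the support, reducing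
  the support each time). So it suffices to check \<open>c \<bullet> b \<ge> 0\<close> for these finitely many circuit
  vectors. Feasibility of \<open>a\<close> gives \<open>c \<bullet> a \<ge> 0\<close>; on the open face of \<open>a\<close> the sign of \<open>c \<bullet> y\<close> is
  that of \<open>c \<bullet> a\<close>, and the closed half-space \<open>c \<bullet> y \<ge> 0\<close> contains the closure \<open>F\<^sub>a\<close>.\<close>

definition dual_cone :: "real^'n^'m \<Rightarrow> 'm set \<Rightarrow> 'm set \<Rightarrow> (real^'m) set" where
  "dual_cone U J K =
     {y. (\<Sum>i\<in>UNIV. y$i *\<^sub>R U$i) = 0 \<and> (\<forall>j\<in>J. 0 \<le> y$j) \<and> (\<forall>k\<in>K. y$k \<le> 0)}"

text \<open>Since \<open>y\<^sub>j = 0\<close> satisfies both premises, \<open>z\<close> vanishes wherever \<open>y\<close> does.\<close>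
definition sign_conformal :: "real^'m \<Rightarrow> real^'m \<Rightarrow> bool" where
  "sign_conformal z y \<longleftrightarrow> (\<forall>j. (0 \<le> y$j \<longrightarrow> 0 \<le> z$j) \<and> (y$j \<le> 0 \<longrightarrow> z$j \<le> 0))"

lemma separating_hyperplane_closed_convex_cone:
  fixes S :: "'a::euclidean_space set"
  assumes "convex_cone S" "closed S" "z \<notin> S"
  obtains w where "w \<bullet> z < 0" "\<forall>x\<in>S. 0 \<le> w \<bullet> x"
proof -
  have "convex S" using assms(1) by (simp add: convex_cone_def)
  then obtain w d where wz: "w \<bullet> z < d" and wS: "\<forall>x\<in>S. d < w \<bullet> x"
    using separating_hyperplane_closed_point assms(2,3) by blast
  have "0 \<in> S" using assms(1) by (simp add: convex_cone_iff)
  then have d: "d < 0" using wS by fastforce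
  have "0 \<le> w \<bullet> x" if "x \<in> S" for x
  proof (rule ccontr)
    assume "\<not> 0 \<le> w \<bullet> x"
    then have "0 \<le> d / (w \<bullet> x)" "w \<bullet> ((d / (w \<bullet> x)) *\<^sub>R x) = d"
      using d by (simp_all add: divide_nonpos_neg)
    then show False
      using wS convex_cone_scaleR[OF assms(1) _ that] by fastforce
  qed
  then show thesis using that[of w] wz d by fastforce
qed

lemma convex_cone_feasible_rhs:
  fixes U :: "real^'n^'m"
  shows "convex_cone {z. polyP U z I J K \<noteq> {}}"
  unfolding convex_cone_iff
proof (intro conjI ballI allI impI)
  show "0 \<in> {z. polyP U z I J K \<noteq> {}}"
    by (auto simp: polyP_def intro!: exI[of _ 0])
next
  fix z w assume "z \<in> {z. polyP U z I J K \<noteq> {}}" "w \<in> {z. polyP U z I J K \<noteq> {}}"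
  then obtain x y where "x \<in> polyP U z I J K" "y \<in> polyP U w I J K" by auto
  then have "x + y \<in> polyP U (z + w) I J K"
    by (auto simp: polyP_def inner_add_right add_mono)
  then show "z + w \<in> {z. polyP U z I J K \<noteq> {}}" by auto
next
  fix z and c :: real assume "z \<in> {z. polyP U z I J K \<noteq> {}}" "0 \<le> c"
  then obtain x where "x \<in> polyP U z I J K" by auto
  then have "c *\<^sub>R x \<in> polyP U (c *\<^sub>R z) I J K"
    using \<open>0 \<le> c\<close> by (auto simp: polyP_def mult_left_mono)
  then show "c *\<^sub>R z \<in> {z. polyP U z I J K \<noteq> {}}" by auto
qed

lemma inner_dual_cone_nonneg_if_feasible:
  fixes U :: "real^'n^'m"
  assumes part: "I \<union> J \<union> K = UNIV"
    and y: "y \<in> dual_cone U J K" and x: "x \<in> polyP U a I J K"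
  shows "0 \<le> y \<bullet> a"
proof -
  have "(\<Sum>i\<in>UNIV. y$i * (U$i \<bullet> x)) = (\<Sum>i\<in>UNIV. y$i *\<^sub>R U$i) \<bullet> x"
    by (simp add: inner_sum_left)
  then have ker: "(\<Sum>i\<in>UNIV. y$i * (U$i \<bullet> x)) = 0"
    using y by (simp add: dual_cone_def)
  have "0 \<le> y$i * (a$i - U$i \<bullet> x)" for i
  proof -
    have "i \<in> I \<or> i \<in> J \<or> i \<in> K" using part by blast
    then show ?thesis
      using x y unfolding polyP_def dual_cone_def
      by (auto intro: mult_nonneg_nonneg mult_nonpos_nonpos)
  qed
  then have "0 \<le> (\<Sum>i\<in>UNIV. y$i * (a$i - U$i \<bullet> x))" by (rule sum_nonneg)
  also have "\<dots> = y \<bullet> a"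
    using ker by (simp add: inner_vec_def right_diff_distrib sum_subtractf)
  finally show ?thesis .
qed

lemma dual_cone_if_nonneg_on_generators:
  fixes U :: "real^'n^'m" and w :: "real^'m"
  assumes "\<And>k. 0 \<le> w \<bullet> column k U" "\<And>k. 0 \<le> w \<bullet> - column k U"
    and "\<And>j. j \<in> J \<Longrightarrow> 0 \<le> w \<bullet> axis j 1" "\<And>k. k \<in> K \<Longrightarrow> 0 \<le> w \<bullet> - axis k 1"
  shows "w \<in> dual_cone U J K"
proof -
  have "w \<bullet> column k U = 0" for k using assms(1,2)[of k] by (simp add: order.antisym)
  then have "(\<Sum>i\<in>UNIV. w$i *\<^sub>R U$i) = 0"
    by (simp add: vec_eq_iff inner_vec_def column_def)
  then show ?thesis using assms(3,4) by (simp add: dual_cone_def inner_axis)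
qed

lemma feasible_if_inner_dual_cone_nonneg:
  fixes U :: "real^'n^'m" and b :: "real^'m"
  assumes part: "I \<inter> J = {}" "I \<inter> K = {}" "J \<inter> K = {}"
    and dual: "\<forall>y\<in>dual_cone U J K. 0 \<le> y \<bullet> b"
  shows "polyP U b I J K \<noteq> {}"
proof (rule ccontr)
  define T where "T = {z. polyP U z I J K \<noteq> {}}"
  define G where "G = range (\<lambda>k. column k U) \<union> range (\<lambda>k. - column k U)
    \<union> (\<lambda>j. axis j 1) ` J \<union> (\<lambda>k. - axis k 1) ` K"
  have "axis k 1 \<in> polyP U (column k U) I J K" "axis k (-1) \<in> polyP U (- column k U) I J K" for k
    by (auto simp: polyP_def column_def inner_axis)
  then have "column k U \<in> T" "- column k U \<in> T" for k unfolding T_def by blast+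
  moreover have "axis j 1 \<in> T" if "j \<in> J" for j
    using that part by (auto simp: T_def polyP_def axis_def intro!: exI[of _ 0])
  moreover have "- axis k 1 \<in> T" if "k \<in> K" for k
    using that part by (auto simp: T_def polyP_def axis_def intro!: exI[of _ 0])
  ultimately have "G \<subseteq> T" unfolding G_def by blast
  then have hull_T: "convex_cone hull G \<subseteq> T"
    using convex_cone_feasible_rhs[of U I J K] unfolding T_def by (intro hull_minimal) auto
  assume "\<not> polyP U b I J K \<noteq> {}"
  then have "b \<notin> convex_cone hull G" using hull_T unfolding T_def by auto
  moreover have "finite G" unfolding G_def by auto
  ultimately obtain w where wb: "w \<bullet> b < 0" and "\<forall>x\<in>convex_cone hull G. 0 \<le> w \<bullet> x"
    using separating_hyperplane_closed_convex_cone convex_cone_convex_cone_hull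
      closed_convex_cone_hull by metis
  then have wG: "\<forall>g\<in>G. 0 \<le> w \<bullet> g" using hull_subset[of G convex_cone] by blast
  have "column k U \<in> G" "- column k U \<in> G" for k
    unfolding G_def by (rule UnI1, rule UnI1, rule UnI1 UnI2, rule rangeI)+
  moreover have "axis j 1 \<in> G" if "j \<in> J" for j
    unfolding G_def by (rule UnI1, rule UnI2, rule imageI, fact)
  moreover have "- axis k 1 \<in> G" if "k \<in> K" for k
    unfolding G_def by (rule UnI2, rule imageI, fact)
  ultimately have "w \<in> dual_cone U J K"
    using wG by (intro dual_cone_if_nonneg_on_generators) blast+
  then show False using dual wb by fastforce
qed

lemma indexed_dependent_contains_circuit:
  fixes U :: "real^'n^'m"
  shows "indexed_dependent U D \<Longrightarrow> \<exists>C\<subseteq>D. circuit U C"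
proof (induction "card D" arbitrary: D rule: less_induct)
  case less
  show ?case
  proof (cases "circuit U D")
    case False
    then obtain D' where "D' \<subset> D" "indexed_dependent U D'"
      using less.prems unfolding circuit_def by blast
    moreover from \<open>D' \<subset> D\<close> have "card D' < card D" by (simp add: psubset_card_mono)
    ultimately show ?thesis using less.hyps by (meson order.trans psubset_imp_subset)
  qed blast
qed

text \<open>Moving from \<open>y\<close> in direction \<open>-c\<close> until the first coordinate reaches \<open>0\<close>; the step
  length is \<open>1 / r\<close> for the largest ratio \<open>r = c\<^sub>j / y\<^sub>j\<close>, so that
  \<open>y\<^sub>j - c\<^sub>j / r = y\<^sub>j (1 - (c\<^sub>j / y\<^sub>j) / r)\<close> with a nonnegative second factor. Where \<open>y\<^sub>j = 0\<close>
  the ratio is \<open>0\<close> by the convention \<open>x / 0 = 0\<close>, which is harmless since \<open>r > 0\<close>.\<close>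
lemma sign_conformal_step:
  fixes y c :: "real^'m"
  assumes supp: "\<forall>j. y$j = 0 \<longrightarrow> c$j = 0" and pos: "\<exists>j. 0 < c$j * y$j"
  obtains t where "0 < t" "sign_conformal (y - t *\<^sub>R c) y"
    "\<exists>j. y$j \<noteq> 0 \<and> (y - t *\<^sub>R c)$j = 0"
proof -
  define r where "r = Max (range (\<lambda>j. c$j / y$j))"
  have r_ge: "c$j / y$j \<le> r" for j unfolding r_def by simp
  have "r \<in> range (\<lambda>j. c$j / y$j)" unfolding r_def by (rule Max_in) auto
  then obtain j0 where j0: "r = c$j0 / y$j0" by blast
  have "0 < r" using pos r_ge by (metis order.strict_trans2 zero_less_divide_iff zero_less_mult_iff)
  have entry: "(y - (1 / r) *\<^sub>R c)$j = y$j * (1 - (c$j / y$j) / r)" for j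
    using supp \<open>0 < r\<close> by (cases "y$j = 0") (auto simp: field_simps)
  have "0 \<le> 1 - (c$j / y$j) / r" for j
    using r_ge[of j] divide_le_eq_1_pos[OF \<open>0 < r\<close>, of "c$j / y$j"] by linarith
  then have "sign_conformal (y - (1 / r) *\<^sub>R c) y"
    unfolding sign_conformal_def entry by (simp add: mult_nonpos_nonneg)
  moreover have "y$j0 \<noteq> 0 \<and> (y - (1 / r) *\<^sub>R c)$j0 = 0"
    using \<open>0 < r\<close> j0 entry[of j0] by auto
  moreover have "0 < 1 / r" using \<open>0 < r\<close> by simp
  ultimately show thesis using that[of "1 / r"] by blast
qed

lemma dual_cone_if_sign_conformal:
  fixes U :: "real^'n^'m"
  assumes "y \<in> dual_cone U J K" "(\<Sum>i\<in>UNIV. z$i *\<^sub>R U$i) = 0" "sign_conformal z y"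
  shows "z \<in> dual_cone U J K"
  using assms unfolding dual_cone_def sign_conformal_def by auto

lemma card_support_less_if_sign_conformal:
  fixes y z :: "real^'m"
  assumes "sign_conformal z y" "\<exists>j. y$j \<noteq> 0 \<and> z$j = 0"
  shows "card {i. z$i \<noteq> 0} < card {i. y$i \<noteq> 0}"
proof (rule psubset_card_mono)
  show "{i. z$i \<noteq> 0} \<subset> {i. y$i \<noteq> 0}"
    using assms unfolding sign_conformal_def by (force simp: order.antisym)
qed simp

lemma dual_cone_reduce_support:
  fixes U :: "real^'n^'m"
  assumes y: "y \<in> dual_cone U J K" and c: "(\<Sum>i\<in>UNIV. c$i *\<^sub>R U$i) = 0"
    and supp: "\<forall>j. y$j = 0 \<longrightarrow> c$j = 0" and pos: "\<exists>j. 0 < c$j * y$j"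
  obtains t where "0 < t" "y - t *\<^sub>R c \<in> dual_cone U J K"
    "card {i. (y - t *\<^sub>R c)$i \<noteq> 0} < card {i. y$i \<noteq> 0}"
proof -
  obtain t where t: "0 < t" "sign_conformal (y - t *\<^sub>R c) y"
    "\<exists>j. y$j \<noteq> 0 \<and> (y - t *\<^sub>R c)$j = 0"
    using sign_conformal_step[OF supp pos] by blast
  have "(\<Sum>i\<in>UNIV. (y - t *\<^sub>R c)$i *\<^sub>R U$i)
      = (\<Sum>i\<in>UNIV. y$i *\<^sub>R U$i) - t *\<^sub>R (\<Sum>i\<in>UNIV. c$i *\<^sub>R U$i)"
    by (simp add: scaleR_diff_left sum_subtractf scaleR_sum_right)
  then have "(\<Sum>i\<in>UNIV. (y - t *\<^sub>R c)$i *\<^sub>R U$i) = 0"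
    using y c by (simp add: dual_cone_def)
  then show thesis
    using that t dual_cone_if_sign_conformal[OF y] card_support_less_if_sign_conformal
    by blast
qed

lemma circuit_vector_within_support:
  fixes U :: "real^'n^'m" and y :: "real^'m"
  assumes cvec: "circuit_vectors U cC"
    and "y \<noteq> 0" and ker: "(\<Sum>i\<in>UNIV. y$i *\<^sub>R U$i) = 0"
  obtains C c where "circuit U C" "c \<in> {cC C, - cC C}" "(\<Sum>i\<in>UNIV. c$i *\<^sub>R U$i) = 0"
    "\<forall>j. y$j = 0 \<longrightarrow> c$j = 0" "\<exists>j. 0 < c$j * y$j"
proof -
  have "(\<Sum>i\<in>{i. y$i \<noteq> 0}. y$i *\<^sub>R U$i) = (\<Sum>i\<in>UNIV. y$i *\<^sub>R U$i)"
    by (rule sum.mono_neutral_left) auto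
  then have "indexed_dependent U {i. y$i \<noteq> 0}"
    using \<open>y \<noteq> 0\<close> ker unfolding indexed_dependent_def by (auto simp: vec_eq_iff)
  then obtain C where CD: "C \<subseteq> {i. y$i \<noteq> 0}" and circ: "circuit U C"
    using indexed_dependent_contains_circuit by blast
  have cC: "\<forall>i. cC C $ i \<noteq> 0 \<longleftrightarrow> i \<in> C" "(\<Sum>i\<in>UNIV. cC C $ i *\<^sub>R U$i) = 0"
    using cvec circ unfolding circuit_vectors_def by blast+
  obtain i0 where "i0 \<in> C"
    using circ unfolding circuit_def indexed_dependent_def by auto
  define c where "c = (if 0 < cC C $ i0 * y$i0 then cC C else - cC C)"
  have "c \<in> {cC C, - cC C}" unfolding c_def by auto
  moreover have "(\<Sum>i\<in>UNIV. c$i *\<^sub>R U$i) = 0"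
    using cC(2) unfolding c_def by (auto simp: sum_negf)
  moreover have "\<forall>j. y$j = 0 \<longrightarrow> c$j = 0" using cC(1) CD unfolding c_def by auto
  moreover have "cC C $ i0 * y$i0 \<noteq> 0" using \<open>i0 \<in> C\<close> cC(1) CD by auto
  then have "0 < c$i0 * y$i0" unfolding c_def
    by (cases "0 < cC C $ i0 * y$i0") (auto simp: linorder_neq_iff mult_less_0_iff zero_less_mult_iff)
  ultimately show thesis using that circ by blast
qed

text \<open>With \<open>c\<close> from \<open>circuit_vector_within_support\<close>, \<open>y' = y - t c\<close> lies in the cone and has smaller support. If \<open>c\<close> itself
  lies in the cone, \<open>y = y' + t c\<close>; otherwise \<open>-c\<close> also agrees in sign with \<open>y\<close> somewhere,
  giving \<open>y'' = y + s c\<close>, and \<open>(s + t) y = s y' + t y''\<close>.\<close>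
lemma inner_dual_cone_nonneg_if_circuits_nonneg:
  fixes U :: "real^'n^'m" and cC :: "'m set \<Rightarrow> real^'m" and b :: "real^'m"
  assumes cvec: "circuit_vectors U cC"
    and circuits: "\<forall>C. circuit U C \<longrightarrow> (\<forall>c\<in>{cC C, - cC C}. c \<in> dual_cone U J K \<longrightarrow> 0 \<le> c \<bullet> b)"
  shows "y \<in> dual_cone U J K \<Longrightarrow> 0 \<le> y \<bullet> b"
proof (induction "card {i. y$i \<noteq> 0}" arbitrary: y rule: less_induct)
  case less
  show ?case
  proof (cases "y = 0")
    case False
    have ker: "(\<Sum>i\<in>UNIV. y$i *\<^sub>R U$i) = 0" using less.prems by (simp add: dual_cone_def)
    obtain C c where circ: "circuit U C" "c \<in> {cC C, - cC C}"
      and c_ker: "(\<Sum>i\<in>UNIV. c$i *\<^sub>R U$i) = 0" and supp: "\<forall>j. y$j = 0 \<longrightarrow> c$j = 0"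
      and pos: "\<exists>j. 0 < c$j * y$j"
      using circuit_vector_within_support[OF cvec False ker] by blast
    obtain t where t: "0 < t" "y - t *\<^sub>R c \<in> dual_cone U J K"
      "card {i. (y - t *\<^sub>R c)$i \<noteq> 0} < card {i. y$i \<noteq> 0}"
      using dual_cone_reduce_support[OF less.prems c_ker supp pos] by blast
    have y'b: "0 \<le> (y - t *\<^sub>R c) \<bullet> b" using less.hyps t(2,3) by blast
    show ?thesis
    proof (cases "c \<in> dual_cone U J K")
      case True
      then have "0 \<le> c \<bullet> b" using circuits circ by blast
      moreover have "y \<bullet> b = (y - t *\<^sub>R c) \<bullet> b + t * (c \<bullet> b)"
        by (simp add: inner_diff_left)
      ultimately show ?thesis using y'b t(1) by simp
    next
      case False
      then have "\<not> sign_conformal c y"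
        using dual_cone_if_sign_conformal[OF less.prems c_ker] by blast
      then obtain j where "0 \<le> y$j \<and> c$j < 0 \<or> y$j \<le> 0 \<and> 0 < c$j"
        unfolding sign_conformal_def by (auto simp: not_le)
      moreover from this have "y$j \<noteq> 0" using supp by auto
      ultimately have "\<exists>j. 0 < (- c)$j * y$j" by (auto simp: mult_less_0_iff)
      moreover have "(\<Sum>i\<in>UNIV. (- c)$i *\<^sub>R U$i) = 0" using c_ker by (simp add: sum_negf)
      moreover have "\<forall>j. y$j = 0 \<longrightarrow> (- c)$j = 0" using supp by simp
      ultimately obtain s where s: "0 < s" "y - s *\<^sub>R (- c) \<in> dual_cone U J K"
        "card {i. (y - s *\<^sub>R (- c))$i \<noteq> 0} < card {i. y$i \<noteq> 0}"
        using dual_cone_reduce_support[OF less.prems] by blast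
      have y''b: "0 \<le> (y - s *\<^sub>R (- c)) \<bullet> b" using less.hyps s(2,3) by blast
      have "(s + t) * (y \<bullet> b) = s * ((y - t *\<^sub>R c) \<bullet> b) + t * ((y - s *\<^sub>R (- c)) \<bullet> b)"
        by (simp add: inner_diff_left algebra_simps)
      then have "0 \<le> (s + t) * (y \<bullet> b)" using s(1) t(1) y'b y''b by simp
      then show ?thesis using s(1) t(1) by (simp add: zero_le_mult_iff)
    qed
  qed simp
qed

lemma circuit_inner_nonneg_on_face:
  assumes circ: "circuit U C" and c: "c \<in> {cC C, - cC C}" and ca: "0 \<le> c \<bullet> a"
    and bF: "b \<in> face_of_point U cC a"
  shows "0 \<le> c \<bullet> b"
proof -
  have "open_face U cC a \<subseteq> {z. 0 \<le> c \<bullet> z}"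
  proof
    fix z assume "z \<in> open_face U cC a"
    then have "sgn (cC C \<bullet> z) = sgn (cC C \<bullet> a)" using circ unfolding open_face_def by blast
    then show "z \<in> {z. 0 \<le> c \<bullet> z}"
      using c ca by (auto simp: sgn_if split: if_splits)
  qed
  then have "face_of_point U cC a \<subseteq> {z. 0 \<le> c \<bullet> z}"
    unfolding face_of_point_def by (rule closure_minimal) (rule closed_halfspace_ge)
  then show ?thesis using bF by blast
qed

theorem mainTheorem5:
  fixes U :: "real^'n^'m" and cC :: "'m set \<Rightarrow> real^'m"
    and a b :: "real^'m" and I J K :: "'m set"
  assumes nonzero: "\<forall>i. U$i \<noteq> 0"
    and cvec: "circuit_vectors U cC"
    and part: "I \<union> J \<union> K = UNIV" "I \<inter> J = {}" "I \<inter> K = {}" "J \<inter> K = {}"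
    and feas: "polyP U a I J K \<noteq> {}"
    and bF: "b \<in> face_of_point U cC a"
  shows "polyP U b I J K \<noteq> {}"
proof -
  obtain x where x: "x \<in> polyP U a I J K" using feas by blast
  have "\<forall>C. circuit U C \<longrightarrow> (\<forall>c\<in>{cC C, - cC C}. c \<in> dual_cone U J K \<longrightarrow> 0 \<le> c \<bullet> b)"
    using circuit_inner_nonneg_on_face[OF _ _ _ bF]
      inner_dual_cone_nonneg_if_feasible[OF part(1) _ x] by blast
  then have "\<forall>y\<in>dual_cone U J K. 0 \<le> y \<bullet> b"
    using inner_dual_cone_nonneg_if_circuits_nonneg[OF cvec] by blast
  then show ?thesis using feasible_if_inner_dual_cone_nonneg part(2-4) by blast
qed

end
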